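(* Let $G$ be a finite, simple, connected graph of order at least three. If $\{u,v\}$ is a weak total metric basis of $G$ (i.e. a WTR-set of minimum cardinality, and this cardinality is $2$), then $u$ and $v$ are not adjacent.
   Context: $d(x,y)$ is the shortest-path distance. A set $W\subseteq V(G)$ is a resolving set if for every two distinct vertices $y,z$ of $G$ there is $x\in W$ with $d(y,x)\ne d(z,x)$. A set $W$ is a weak total resolving set (WTR-set) if $W$ is a resolving set and, for every $w\in W$ and every $x\in V(G)\setminus W$, there is $w'\in W\setminus\{w\}$ with $d(x,w')\ne d(w,w')$. A weak total metric basis is a WTR-set of minimum cardinality; this minimum is $\dim_{wt}(G)$. *)

theory Defs
  imports Main
begin

definition simple_graph :: "'a set \<Rightarrow> ('a \<Rightarrow> 'a \<Rightarrow> bool) \<Rightarrow> bool" where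
  "simple_graph V E \<longleftrightarrow> finite V \<and> (\<forall>x y. E x y \<longrightarrow> x \<in> V \<and> y \<in> V)
     \<and> (\<forall>x y. E x y \<longrightarrow> E y x) \<and> (\<forall>x. \<not> E x x)"

definition walk :: "'a set \<Rightarrow> ('a \<Rightarrow> 'a \<Rightarrow> bool) \<Rightarrow> 'a \<Rightarrow> 'a \<Rightarrow> nat \<Rightarrow> bool" where
  "walk V E x y n \<longleftrightarrow> (\<exists>xs. length xs = Suc n \<and> hd xs = x \<and> last xs = y
      \<and> set xs \<subseteq> V \<and> (\<forall>i < n. E (xs ! i) (xs ! Suc i)))"

definition connected_graph :: "'a set \<Rightarrow> ('a \<Rightarrow> 'a \<Rightarrow> bool) \<Rightarrow> bool" where
  "connected_graph V E \<longleftrightarrow> (\<forall>x\<in>V. \<forall>y\<in>V. \<exists>n. walk V E x y n)"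

definition dist :: "'a set \<Rightarrow> ('a \<Rightarrow> 'a \<Rightarrow> bool) \<Rightarrow> 'a \<Rightarrow> 'a \<Rightarrow> nat" where
  "dist V E x y = (LEAST n. walk V E x y n)"

definition resolving_set :: "'a set \<Rightarrow> ('a \<Rightarrow> 'a \<Rightarrow> bool) \<Rightarrow> 'a set \<Rightarrow> bool" where
  "resolving_set V E W \<longleftrightarrow> W \<subseteq> V \<and>
     (\<forall>y\<in>V. \<forall>z\<in>V. y \<noteq> z \<longrightarrow> (\<exists>x\<in>W. dist V E y x \<noteq> dist V E z x))"

definition wtr_set :: "'a set \<Rightarrow> ('a \<Rightarrow> 'a \<Rightarrow> bool) \<Rightarrow> 'a set \<Rightarrow> bool" where
  "wtr_set V E W \<longleftrightarrow> resolving_set V E W \<and>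
     (\<forall>w\<in>W. \<forall>x\<in>V - W. \<exists>w'\<in>W - {w}. dist V E x w' \<noteq> dist V E w w')"

definition weak_total_metric_basis :: "'a set \<Rightarrow> ('a \<Rightarrow> 'a \<Rightarrow> bool) \<Rightarrow> 'a set \<Rightarrow> bool" where
  "weak_total_metric_basis V E W \<longleftrightarrow> wtr_set V E W \<and>
     (\<forall>W'. wtr_set V E W' \<longrightarrow> card W \<le> card W')"

end

theory Submission
  imports Defs
begin

text \<open>If \<open>u\<close> and \<open>v\<close> were adjacent, connectivity together with a third vertex gives a vertex
  \<open>a \<notin> {u, v}\<close> adjacent to one of them, say to \<open>u\<close>. Then \<open>d(a, u) = 1 = d(v, u)\<close>, so the only
  candidate \<open>u \<in> {u, v} - {v}\<close> fails to separate \<open>a\<close> from \<open>v\<close>, contradicting the WTR property.\<close>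

lemma dist_adjacent:
  assumes "simple_graph V E" "E a b"
  shows "dist V E a b = 1"
proof -
  have ab: "a \<in> V" "b \<in> V" "a \<noteq> b"
    using assms unfolding simple_graph_def by metis+
  have no_walk_0: "\<not> walk V E a b 0"
    unfolding walk_def using ab(3) by (auto simp: length_Suc_conv)
  show ?thesis
    unfolding dist_def
  proof (rule Least_equality)
    show "walk V E a b 1"
      unfolding walk_def by (rule exI[of _ "[a, b]"]) (use ab assms(2) in auto)
  next
    show "1 \<le> n" if "walk V E a b n" for n
      using that no_walk_0 by (cases n) auto
  qed
qed

lemma walk_enters_set:
  assumes "walk V E x y n" "x \<notin> S" "y \<in> S"
  shows "\<exists>a\<in>V - S. \<exists>b\<in>S. E a b"
proof (rule ccontr)
  assume no_edge: "\<not> ?thesis"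
  obtain xs where xs: "length xs = Suc n" "hd xs = x" "last xs = y" "set xs \<subseteq> V"
    "\<forall>i<n. E (xs ! i) (xs ! Suc i)"
    using assms(1) unfolding walk_def by blast
  have "xs ! i \<notin> S" if "i \<le> n" for i
    using that
  proof (induction i)
    case 0
    then show ?case using xs(1,2) assms(2) by (metis hd_conv_nth list.size(3) nat.distinct(1))
  next
    case (Suc i)
    then have "xs ! i \<in> V - S" "E (xs ! i) (xs ! Suc i)"
      using xs(1,4,5) nth_mem by fastforce+
    then show ?case using no_edge by blast
  qed
  moreover have "last xs = xs ! n"
    using xs(1) by (metis diff_Suc_1 last_conv_nth list.size(3) nat.distinct(1))
  ultimately show False using xs(3) assms(3) by auto
qed

lemma connected_graph_edge_into:
  assumes "connected_graph V E" "S \<subseteq> V" "x \<in> V - S" "y \<in> S"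
  shows "\<exists>a\<in>V - S. \<exists>b\<in>S. E a b"
proof -
  obtain n where "walk V E x y n"
    using assms unfolding connected_graph_def by blast
  then show ?thesis
    by (rule walk_enters_set) (use assms(3,4) in auto)
qed

lemma wtr_set_adjacent_pair_no_outer_neighbour:
  assumes "simple_graph V E" "wtr_set V E {u, v}" "E u v" "a \<in> V - {u, v}"
  shows "\<not> E a u"
proof
  assume "E a u"
  have "dist V E a u = dist V E v u"
    using dist_adjacent[OF assms(1)] \<open>E a u\<close> assms(1,3) unfolding simple_graph_def by metis
  moreover have "\<exists>w'\<in>{u, v} - {v}. dist V E a w' \<noteq> dist V E v w'"
    using assms(2,4) unfolding wtr_set_def by blast
  ultimately show False by auto
qed

theorem proposition3:
  fixes V :: "'a set" and E :: "'a \<Rightarrow> 'a \<Rightarrow> bool" and u v :: 'a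
  assumes "simple_graph V E" and "connected_graph V E" and "card V \<ge> 3"
    and "u \<noteq> v"
    and "weak_total_metric_basis V E {u, v}"
  shows "\<not> E u v"
proof
  assume "E u v"
  then have uv: "{u, v} \<subseteq> V" "E v u"
    using assms(1) unfolding simple_graph_def by auto
  have wtr: "wtr_set V E {u, v}" "wtr_set V E {v, u}"
    using assms(5) unfolding weak_total_metric_basis_def by (simp_all add: insert_commute)
  have "card {u, v} < card V" using assms(3,4) by simp
  then have "\<not> V \<subseteq> {u, v}" using card_mono[of "{u, v}" V] by auto
  then obtain x where "x \<in> V - {u, v}" by blast
  then obtain a b where "a \<in> V - {u, v}" "b \<in> {u, v}" "E a b"
    using connected_graph_edge_into[OF assms(2) uv(1)] by blast
  moreover have "\<not> E a u" "\<not> E a v" if "a \<in> V - {u, v}"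
    using wtr_set_adjacent_pair_no_outer_neighbour[OF assms(1) wtr(1) \<open>E u v\<close>]
      wtr_set_adjacent_pair_no_outer_neighbour[OF assms(1) wtr(2) uv(2)] that
    by (auto simp: insert_commute)
  ultimately show False by blast
qed

end
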